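(* Let $G$ be a planar PCC graph, let $v$ be a vertex and let $\sigma$ be a face that appears in the multiset $F(v)$ with multiplicity $2$. Then $7\le|\sigma|\le 11$.
   Context: $G$ is a finite simple connected graph 2-cell embedded in the sphere. For a vertex $v$, $F(v)$ is the multiset of faces incident to $v$, one entry for each corner of $v$ (so a face touching $v$ at two corners appears twice). $|\sigma|$ is the length of the boundary walk of $\sigma$, and $K(v)=1-\frac{\deg(v)}{2}+\sum_{\sigma\in F(v)}\frac1{|\sigma|}$. A prism (resp. antiprism) of order $N$ is the planar graph with $2N$ vertices, two $N$-faces and $N$ quadrilaterals (resp. $2N$ triangles), each vertex incident to two quadrilaterals and one $N$-face (resp. three triangles and one $N$-face). A planar PCC graph is such a $G$ with $K(v)>0$, $\deg(v)\ge3$ for all $v$, not a prism or antiprism. *)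

theory Defs
  imports Complex_Main "HOL-Combinatorics.Permutations" "HOL-Combinatorics.Orbits"
          "HOL-Library.Multiset"
begin

text \<open>A 2-cell embedding of a finite connected graph in an orientable surface is encoded
  by a rotation system (combinatorial map) on the set D of darts (= directed edges):
  alpha is the fixed-point-free involution reversing a dart, rho is the rotation
  (cyclic order of the darts leaving a vertex). Vertices are the rho-orbits,
  edges the alpha-orbits and faces the orbits of phi = rho o alpha (the face boundary
  walks). The surface is the sphere iff Euler's formula V - E + F = 2 holds.\<close>

definition vertices_of :: "'d set \<Rightarrow> ('d \<Rightarrow> 'd) \<Rightarrow> 'd set set" where
  "vertices_of D rho = {orbit rho d | d. d \<in> D}"

definition edges_of :: "'d set \<Rightarrow> ('d \<Rightarrow> 'd) \<Rightarrow> 'd set set" where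
  "edges_of D alpha = {{d, alpha d} | d. d \<in> D}"

definition face_of :: "('d \<Rightarrow> 'd) \<Rightarrow> ('d \<Rightarrow> 'd) \<Rightarrow> 'd \<Rightarrow> 'd set" where
  "face_of alpha rho d = orbit (rho \<circ> alpha) d"

definition faces_of :: "'d set \<Rightarrow> ('d \<Rightarrow> 'd) \<Rightarrow> ('d \<Rightarrow> 'd) \<Rightarrow> 'd set set" where
  "faces_of D alpha rho = {face_of alpha rho d | d. d \<in> D}"

definition face_len :: "'d set \<Rightarrow> nat" where
  "face_len f = card f"

definition vdeg :: "'d set \<Rightarrow> nat" where
  "vdeg v = card v"

text \<open>The corners of v correspond bijectively to the darts leaving v; the corner
  between d and rho d lies in the face containing rho d. Hence F(v) is the multiset
  of faces of the darts at v.\<close>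
definition corner_faces :: "('d \<Rightarrow> 'd) \<Rightarrow> ('d \<Rightarrow> 'd) \<Rightarrow> 'd set \<Rightarrow> 'd set multiset" where
  "corner_faces alpha rho v = image_mset (face_of alpha rho) (mset_set v)"

definition curvature :: "('d \<Rightarrow> 'd) \<Rightarrow> ('d \<Rightarrow> 'd) \<Rightarrow> 'd set \<Rightarrow> real" where
  "curvature alpha rho v =
     1 - real (vdeg v) / 2 + (\<Sum>\<^sub># (image_mset (\<lambda>f. 1 / real (face_len f)) (corner_faces alpha rho v)))"

definition plane_map :: "'d set \<Rightarrow> ('d \<Rightarrow> 'd) \<Rightarrow> ('d \<Rightarrow> 'd) \<Rightarrow> bool" where
  "plane_map D alpha rho \<longleftrightarrow>
     finite D \<and> D \<noteq> {} \<and>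
     alpha permutes D \<and> (\<forall>d\<in>D. alpha d \<noteq> d \<and> alpha (alpha d) = d) \<and>
     rho permutes D \<and>
     (\<forall>d\<in>D. \<forall>e\<in>D. (d, e) \<in> ({(x, alpha x) | x. x \<in> D} \<union> {(x, rho x) | x. x \<in> D})\<^sup>*) \<and>
     int (card (vertices_of D rho)) - int (card (edges_of D alpha))
       + int (card (faces_of D alpha rho)) = 2"

definition simple_map :: "'d set \<Rightarrow> ('d \<Rightarrow> 'd) \<Rightarrow> ('d \<Rightarrow> 'd) \<Rightarrow> bool" where
  "simple_map D alpha rho \<longleftrightarrow>
     (\<forall>d\<in>D. alpha d \<notin> orbit rho d) \<and>
     (\<forall>d\<in>D. \<forall>e\<in>D. orbit rho d = orbit rho e \<and> orbit rho (alpha d) = orbit rho (alpha e)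
        \<longrightarrow> d = e)"

definition is_prism :: "'d set \<Rightarrow> ('d \<Rightarrow> 'd) \<Rightarrow> ('d \<Rightarrow> 'd) \<Rightarrow> nat \<Rightarrow> bool" where
  "is_prism D alpha rho N \<longleftrightarrow> N \<ge> 3 \<and>
     card (vertices_of D rho) = 2 * N \<and>
     (\<exists>A B Q. A \<noteq> B \<and> A \<notin> Q \<and> B \<notin> Q \<and>
        faces_of D alpha rho = {A, B} \<union> Q \<and>
        face_len A = N \<and> face_len B = N \<and> card Q = N \<and> (\<forall>q\<in>Q. face_len q = 4) \<and>
        (\<forall>v\<in>vertices_of D rho. \<exists>q1 q2 n. q1 \<in> Q \<and> q2 \<in> Q \<and> n \<in> {A, B} \<and>
            corner_faces alpha rho v = {#q1, q2, n#}))"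

definition is_antiprism :: "'d set \<Rightarrow> ('d \<Rightarrow> 'd) \<Rightarrow> ('d \<Rightarrow> 'd) \<Rightarrow> nat \<Rightarrow> bool" where
  "is_antiprism D alpha rho N \<longleftrightarrow> N \<ge> 3 \<and>
     card (vertices_of D rho) = 2 * N \<and>
     (\<exists>A B T. A \<noteq> B \<and> A \<notin> T \<and> B \<notin> T \<and>
        faces_of D alpha rho = {A, B} \<union> T \<and>
        face_len A = N \<and> face_len B = N \<and> card T = 2 * N \<and> (\<forall>t\<in>T. face_len t = 3) \<and>
        (\<forall>v\<in>vertices_of D rho. \<exists>t1 t2 t3 n. t1 \<in> T \<and> t2 \<in> T \<and> t3 \<in> T \<and> n \<in> {A, B} \<and>
            corner_faces alpha rho v = {#t1, t2, t3, n#}))"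

definition planar_PCC :: "'d set \<Rightarrow> ('d \<Rightarrow> 'd) \<Rightarrow> ('d \<Rightarrow> 'd) \<Rightarrow> bool" where
  "planar_PCC D alpha rho \<longleftrightarrow>
     plane_map D alpha rho \<and> simple_map D alpha rho \<and>
     (\<forall>v\<in>vertices_of D rho. curvature alpha rho v > 0 \<and> vdeg v \<ge> 3) \<and>
     (\<nexists>N. is_prism D alpha rho N) \<and> (\<nexists>N. is_antiprism D alpha rho N)"

end

theory Submission
  imports Defs
begin

text \<open>Let the face \<sigma> pass twice through v, at the darts x \<noteq> y. Following the boundary walk
  from x to y and from y back to x, each part has length at least 3: a part of length 1
  or 2 would close up into a loop or a double edge. Hence |\<sigma>| \<ge> 6 and, since all faces
  are at least triangles, K(v) \<le> 1 - d/2 + 2/|\<sigma>| + (d - 2)/3 with d = deg v \<ge> 3.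
  Positivity of K(v) forces d = 3 and |\<sigma>| < 12. Finally |\<sigma>| = 6 is impossible at a vertex
  of degree 3: both walks of length 3 would have to enter v through its third dart.\<close>

locale simple_rotation_system =
  fixes D :: "'d set" and alpha rho :: "'d \<Rightarrow> 'd"
  assumes finite_darts: "finite D"
    and alpha_permutes: "alpha permutes D"
    and alpha_involution: "\<And>d. d \<in> D \<Longrightarrow> alpha (alpha d) = d"
    and rho_permutes: "rho permutes D"
    and no_loop: "\<And>d. d \<in> D \<Longrightarrow> alpha d \<notin> orbit rho d"
    and no_multi_edge: "\<And>d e. d \<in> D \<Longrightarrow> e \<in> D \<Longrightarrow> orbit rho d = orbit rho e \<Longrightarrow>
                          orbit rho (alpha d) = orbit rho (alpha e) \<Longrightarrow> d = e"
    and rho_no_fixpoint: "\<And>d. d \<in> D \<Longrightarrow> rho d \<noteq> d"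
begin

definition phi :: "'d \<Rightarrow> 'd" where
  "phi = rho \<circ> alpha"

lemma face_of_eq_orbit_phi: "face_of alpha rho d = orbit phi d"
  by (simp add: face_of_def phi_def)

lemma permutation_rho: "permutation rho"
  using rho_permutes finite_darts permutation_permutes by blast

lemma permutation_phi: "permutation phi"
  unfolding phi_def
  using rho_permutes alpha_permutes finite_darts permutation_permutes permutes_compose by blast

lemma alpha_in_darts: "d \<in> D \<Longrightarrow> alpha d \<in> D"
  using permutes_in_image[OF alpha_permutes] by simp

lemma rho_in_darts: "d \<in> D \<Longrightarrow> rho d \<in> D"
  using permutes_in_image[OF rho_permutes] by simp

lemma phi_in_darts: "d \<in> D \<Longrightarrow> phi d \<in> D"
  by (simp add: phi_def alpha_in_darts rho_in_darts)

lemma orbit_rho_subset_darts: "d \<in> D \<Longrightarrow> orbit rho d \<subseteq> D"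
  using permutes_orbit_subset[OF rho_permutes] by blast

lemma orbit_rho_eq: "b \<in> orbit rho a \<Longrightarrow> orbit rho b = orbit rho a"
  by (rule orbit_cyclic_eq3[OF cyclic_on_orbit'[OF permutation_rho]])

lemma self_in_orbit_rho: "a \<in> orbit rho a"
  by (rule permutation_self_in_orbit[OF permutation_rho])

lemma self_in_orbit_phi: "a \<in> orbit phi a"
  by (rule permutation_self_in_orbit[OF permutation_phi])

lemma orbit_rho_rho: "orbit rho (rho a) = orbit rho a"
  by (rule permutation_orbit_step[OF permutation_rho])

lemma phi_notin_vertex:
  assumes "a \<in> D"
  shows "phi a \<notin> orbit rho a"
proof
  assume "phi a \<in> orbit rho a"
  then have "orbit rho (rho (alpha a)) = orbit rho a"
    by (simp add: phi_def orbit_rho_eq)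
  then have "alpha a \<in> orbit rho a"
    using orbit_rho_rho self_in_orbit_rho by metis
  with no_loop assms show False by blast
qed

lemma phi_phi_notin_vertex:
  assumes "a \<in> D"
  shows "phi (phi a) \<notin> orbit rho a"
proof
  assume returns: "phi (phi a) \<in> orbit rho a"
  define t where "t = phi a"
  have "t \<in> D" "alpha a \<in> D"
    using assms by (simp_all add: t_def phi_in_darts alpha_in_darts)
  moreover have "orbit rho (alpha a) = orbit rho t"
    by (simp add: t_def phi_def orbit_rho_rho)
  moreover have "orbit rho (alpha (alpha a)) = orbit rho (alpha t)"
    using returns orbit_rho_eq[OF returns] orbit_rho_rho[of "alpha t"]
    by (simp add: t_def phi_def alpha_involution assms)
  ultimately have "alpha a = t"
    using no_multi_edge by blast
  then have "rho (alpha a) = alpha a"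
    by (simp add: t_def phi_def)
  with rho_no_fixpoint \<open>alpha a \<in> D\<close> show False by blast
qed

lemma phi_funpow_notin_vertex:
  assumes "a \<in> D" "k = 1 \<or> k = 2"
  shows "(phi ^^ k) a \<notin> orbit rho a"
  using assms phi_notin_vertex phi_phi_notin_vertex by (auto simp: numeral_2_eq_2)

lemma card_orbit_phi: "card (orbit phi x) = funpow_dist1 phi x x"
proof -
  have "orbit phi x = (\<lambda>n. (phi ^^ n) x) ` {0..<funpow_dist1 phi x x}"
    using orbit_conv_funpow_dist1 self_in_orbit_phi by metis
  moreover have "inj_on (\<lambda>n. (phi ^^ n) x) {0..<funpow_dist1 phi x x}"
    using inj_on_funpow_dist1 self_in_orbit_phi by metis
  ultimately show ?thesis by (simp add: card_image)
qed

lemma card_orbit_phi_ge3: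
  assumes "z \<in> D"
  shows "3 \<le> card (orbit phi z)"
proof -
  let ?n = "funpow_dist1 phi z z"
  have "(phi ^^ ?n) z = z"
    using funpow_dist1_prop self_in_orbit_phi by metis
  then have "?n \<noteq> 1" "?n \<noteq> 2"
    using phi_funpow_notin_vertex[OF assms] self_in_orbit_rho by metis+
  then show ?thesis
    by (simp add: card_orbit_phi)
qed

lemma repeated_face_split:
  assumes "x \<in> D" "y \<in> orbit rho x" "y \<in> orbit phi x" "x \<noteq> y"
  obtains k m where "(phi ^^ k) x = y" "(phi ^^ m) y = x" "k + m = card (orbit phi x)"
    "3 \<le> k" "3 \<le> m"
proof -
  define n where "n = funpow_dist1 phi x x"
  define k where "k = funpow_dist1 phi x y"
  have n: "(phi ^^ n) x = x"
    unfolding n_def using funpow_dist1_prop self_in_orbit_phi by metis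
  have k: "(phi ^^ k) x = y"
    unfolding k_def using funpow_dist1_prop assms(3) by metis
  have "k \<le> n"
    unfolding k_def using funpow_dist1_le_self[OF n _ assms(3)] by (simp add: n_def)
  moreover have "k \<noteq> n"
    using n k assms(4) by metis
  ultimately have "k < n" by simp
  have m: "(phi ^^ (n - k)) y = x"
  proof -
    have "(phi ^^ (n - k)) y = (phi ^^ (n - k + k)) x"
      using k by (simp only: funpow_add comp_apply)
    with \<open>k < n\<close> n show ?thesis by simp
  qed
  have "y \<in> D"
    using assms(1,2) orbit_rho_subset_darts by blast
  moreover have "x \<in> orbit rho y"
    using orbit_rho_eq[OF assms(2)] self_in_orbit_rho by metis
  ultimately have "n - k \<noteq> 1" "n - k \<noteq> 2"
    using phi_funpow_notin_vertex m by metis+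
  moreover have "k \<noteq> 0"
    by (simp add: k_def)
  moreover have "k \<noteq> 1" "k \<noteq> 2"
    using phi_funpow_notin_vertex[OF assms(1)] assms(2) k by metis+
  moreover have "card (orbit phi x) = n"
    by (simp add: n_def card_orbit_phi)
  ultimately show ?thesis
    using that[OF k m] \<open>k < n\<close> by simp
qed

lemma card_repeated_face_ge6:
  assumes "x \<in> D" "y \<in> orbit rho x" "y \<in> orbit phi x" "x \<noteq> y"
  shows "6 \<le> card (orbit phi x)"
  using repeated_face_split[OF assms] by (metis add_mono numeral_Bit0)

lemma walk_of_length3_enters_vertex:
  assumes "a \<in> D" "b \<in> orbit rho a" "(phi ^^ 3) a = b"
  shows "alpha (phi (phi a)) \<in> orbit rho a - {a, b}" "rho (alpha (phi (phi a))) = b"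
proof -
  let ?e = "alpha (phi (phi a))"
  show b: "rho ?e = b"
    using assms(3) by (simp add: phi_def numeral_3_eq_3)
  have "b \<in> D"
    using assms(1,2) orbit_rho_subset_darts by blast
  have "orbit rho ?e = orbit rho a"
    using orbit_rho_rho[of ?e] b orbit_rho_eq[OF assms(2)] by simp
  then have "?e \<in> orbit rho a"
    using self_in_orbit_rho by metis
  moreover have "?e \<noteq> b"
    using b rho_no_fixpoint[OF \<open>b \<in> D\<close>] by metis
  moreover have "?e \<noteq> a"
  proof
    assume "?e = a"
    then have "phi (phi a) = alpha a"
      using alpha_involution[OF phi_in_darts[OF phi_in_darts[OF assms(1)]]] by metis
    moreover have "alpha a \<in> orbit rho (phi a)"
      using orbit_rho_rho[of "alpha a"] self_in_orbit_rho by (simp add: phi_def)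
    ultimately show False
      using phi_notin_vertex[OF phi_in_darts[OF assms(1)]] by simp
  qed
  ultimately show "?e \<in> orbit rho a - {a, b}" by simp
qed

lemma card_repeated_face_ne6:
  assumes "x \<in> D" "y \<in> orbit rho x" "y \<in> orbit phi x" "x \<noteq> y"
    and "card (orbit rho x) = 3"
  shows "card (orbit phi x) \<noteq> 6"
proof
  assume "card (orbit phi x) = 6"
  obtain k m where "(phi ^^ k) x = y" "(phi ^^ m) y = x" "k + m = card (orbit phi x)"
    "3 \<le> k" "3 \<le> m"
    by (rule repeated_face_split[OF assms(1-4)])
  with \<open>card (orbit phi x) = 6\<close> have "(phi ^^ 3) x = y" "(phi ^^ 3) y = x"
    by (metis add_le_imp_le_diff diff_add_inverse le_antisym numeral_Bit0 add_left_mono)+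
  moreover have "y \<in> D" "x \<in> orbit rho y" "orbit rho y = orbit rho x"
    using assms(1,2) orbit_rho_subset_darts orbit_rho_eq self_in_orbit_rho by (blast, metis, blast)
  ultimately have ex: "alpha (phi (phi x)) \<in> orbit rho x - {x, y}" "rho (alpha (phi (phi x))) = y"
    and ey: "alpha (phi (phi y)) \<in> orbit rho x - {x, y}" "rho (alpha (phi (phi y))) = x"
    using walk_of_length3_enters_vertex[of x y] walk_of_length3_enters_vertex[of y x] assms
    by auto
  have "finite (orbit rho x)"
    using orbit_rho_subset_darts[OF assms(1)] finite_darts finite_subset by blast
  \<comment> \<open>Both walks enter v through the third dart of v.\<close>
  have "alpha (phi (phi x)) = alpha (phi (phi y))"
  proof (rule ccontr)
    assume "alpha (phi (phi x)) \<noteq> alpha (phi (phi y))"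
    then have "card {x, y, alpha (phi (phi x)), alpha (phi (phi y))} = 4"
      using ex ey assms(4) by auto
    moreover have "card {x, y, alpha (phi (phi x)), alpha (phi (phi y))} \<le> card (orbit rho x)"
      using ex ey self_in_orbit_rho assms(2)
      by (intro card_mono[OF \<open>finite (orbit rho x)\<close>]) auto
    ultimately show False
      using assms(5) by simp
  qed
  then show False
    using ex(2) ey(2) assms(4) by simp
qed

lemma curvature_le_repeated_face:
  assumes "x \<in> D" "y \<in> orbit rho x" "y \<in> orbit phi x" "x \<noteq> y"
  shows "curvature alpha rho (orbit rho x)
           \<le> 1 - real (card (orbit rho x)) / 2 + 2 / real (card (orbit phi x))
             + (real (card (orbit rho x)) - 2) / 3"
proof -
  let ?v = "orbit rho x"
  define g where "g z = 1 / real (card (orbit phi z))" for z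
  have "?v \<subseteq> D" "finite ?v" "x \<in> ?v"
    using orbit_rho_subset_darts[OF assms(1)] finite_darts finite_subset self_in_orbit_rho
    by blast+
  have curv: "curvature alpha rho ?v = 1 - real (card ?v) / 2 + (\<Sum>z\<in>?v. g z)"
    unfolding curvature_def corner_faces_def vdeg_def g_def face_len_def face_of_eq_orbit_phi
    by (simp add: sum_unfold_sum_mset image_mset.compositionality o_def)
  have "orbit phi y = orbit phi x"
    by (rule orbit_cyclic_eq3[OF cyclic_on_orbit'[OF permutation_phi] assms(3)])
  then have "(\<Sum>z\<in>{x, y}. g z) = 2 / real (card (orbit phi x))"
    using assms(4) by (simp add: g_def)
  moreover have "(\<Sum>z\<in>?v - {x, y}. g z) \<le> (\<Sum>z\<in>?v - {x, y}. 1 / 3)"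
  proof (rule sum_mono)
    fix z assume "z \<in> ?v - {x, y}"
    then have "3 \<le> card (orbit phi z)"
      using \<open>?v \<subseteq> D\<close> card_orbit_phi_ge3 by blast
    then show "g z \<le> 1 / 3"
      by (simp add: g_def field_simps)
  qed
  moreover have "card (?v - {x, y}) = card ?v - 2" "2 \<le> card ?v"
    using \<open>finite ?v\<close> \<open>x \<in> ?v\<close> assms(2,4) card_mono[of ?v "{x, y}"] by auto
  moreover have "(\<Sum>z\<in>?v. g z) = (\<Sum>z\<in>{x, y}. g z) + (\<Sum>z\<in>?v - {x, y}. g z)"
    using sum.subset_diff[of "{x, y}" ?v g] \<open>finite ?v\<close> \<open>x \<in> ?v\<close> assms(2) by simp
  ultimately show ?thesis
    using curv by (simp add: of_nat_diff)
qed

end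

lemma count_corner_faces:
  assumes "finite v"
  shows "count (corner_faces alpha rho v) \<sigma> = card {x \<in> v. face_of alpha rho x = \<sigma>}"
  unfolding corner_faces_def count_image_mset' using assms
  by (simp add: sum.inter_filter[symmetric] eq_commute)

lemma planar_PCC_simple_rotation_system:
  assumes "planar_PCC D alpha rho"
  shows "simple_rotation_system D alpha rho"
proof
  have P: "plane_map D alpha rho" "simple_map D alpha rho"
    "\<forall>v\<in>vertices_of D rho. vdeg v \<ge> 3"
    using assms unfolding planar_PCC_def by auto
  show "finite D" "alpha permutes D" "rho permutes D" "\<And>d. d \<in> D \<Longrightarrow> alpha (alpha d) = d"
    using P(1) unfolding plane_map_def by auto
  show "\<And>d. d \<in> D \<Longrightarrow> alpha d \<notin> orbit rho d"
    "\<And>d e. d \<in> D \<Longrightarrow> e \<in> D \<Longrightarrow> orbit rho d = orbit rho e \<Longrightarrow>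
       orbit rho (alpha d) = orbit rho (alpha e) \<Longrightarrow> d = e"
    using P(2) unfolding simple_map_def by blast+
  show "rho d \<noteq> d" if "d \<in> D" for d
  proof
    assume "rho d = d"
    then have "orbit rho d = {d}" by (simp add: orbit_eq_singleton_iff)
    moreover have "orbit rho d \<in> vertices_of D rho"
      using that unfolding vertices_of_def by blast
    ultimately show False using P(3) by (force simp: vdeg_def)
  qed
qed

lemma (in simple_rotation_system) repeated_face_at_vertex:
  assumes "v \<in> vertices_of D rho" "count (corner_faces alpha rho v) \<sigma> = 2"
  obtains x y where "x \<in> D" "y \<in> orbit rho x" "y \<in> orbit phi x" "x \<noteq> y"
    "v = orbit rho x" "\<sigma> = orbit phi x"
proof -
  obtain d where "d \<in> D" and v: "v = orbit rho d"
    using assms(1) unfolding vertices_of_def by blast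
  then have "finite v"
    using orbit_rho_subset_darts finite_darts finite_subset by blast
  then have "card {z \<in> v. face_of alpha rho z = \<sigma>} = 2"
    using assms(2) count_corner_faces by metis
  then obtain x y where "x \<noteq> y" and "{z \<in> v. face_of alpha rho z = \<sigma>} = {x, y}"
    by (meson card_2_iff)
  then have "x \<in> v" "y \<in> v" and \<sigma>: "\<sigma> = orbit phi x" "\<sigma> = orbit phi y"
    by (auto simp: set_eq_iff face_of_eq_orbit_phi)
  moreover have "x \<in> D" "v = orbit rho x"
    using \<open>x \<in> v\<close> v \<open>d \<in> D\<close> orbit_rho_subset_darts orbit_rho_eq by blast+
  ultimately show ?thesis
    using that \<open>x \<noteq> y\<close> self_in_orbit_phi by metis
qed

lemma positive_curvature_bound_imp:
  fixes n s :: nat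
  assumes "3 \<le> n" "6 \<le> s" and pos: "0 < 1 - real n / 2 + 2 / real s + (real n - 2) / 3"
  shows "n = 3 \<and> s < 12"
proof -
  have "2 / real s \<le> 1 / 3"
    using assms(2) by (simp add: field_simps)
  with pos have "0 < 1 - real n / 2 + 1 / 3 + (real n - 2) / 3"
    by linarith
  then have "real n < 4"
    by (simp add: field_simps)
  with assms(1) have "n = 3"
    by simp
  moreover from this pos assms(2) have "s < 12"
    by (simp add: field_simps)
  ultimately show ?thesis ..
qed

theorem corollary2p3:
  fixes D :: "'d set" and alpha rho :: "'d \<Rightarrow> 'd"
  assumes "planar_PCC D alpha rho"
    and "v \<in> vertices_of D rho"
    and "\<sigma> \<in> faces_of D alpha rho"
    and "count (corner_faces alpha rho v) \<sigma> = 2"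
  shows "7 \<le> face_len \<sigma> \<and> face_len \<sigma> \<le> 11"
proof -
  interpret simple_rotation_system D alpha rho
    using assms(1) by (rule planar_PCC_simple_rotation_system)
  obtain x y where rep: "x \<in> D" "y \<in> orbit rho x" "y \<in> orbit phi x" "x \<noteq> y"
    and v: "v = orbit rho x" and \<sigma>: "\<sigma> = orbit phi x"
    using repeated_face_at_vertex[OF assms(2,4)] by blast
  have "3 \<le> card v" "0 < curvature alpha rho v"
    using assms(1,2) by (auto simp: planar_PCC_def vdeg_def)
  then have "card v = 3 \<and> card \<sigma> < 12"
    using positive_curvature_bound_imp card_repeated_face_ge6[OF rep]
      curvature_le_repeated_face[OF rep] v \<sigma> by fastforce
  then show ?thesis
    using card_repeated_face_ge6[OF rep] card_repeated_face_ne6[OF rep] v \<sigma>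
    by (auto simp: face_len_def)
qed

end
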